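(* Let $0<a<1$, $u=a^{-1}+\sqrt{a^{-2}-1}$, and $\alpha_n=-\frac{u-u^{-1}}{u^{n+2}-u^{-n-2}}$ for $n\ge0$. Then for nonnegative integers $n,r,s$, \[ \mu_{n,r,s}=\begin{cases}1&\text{if } s=n+r,\\[2pt] -\dfrac{(u^n-u^{-n})(u-u^{-1})}{(u^{s+2}-u^{-(s+2)})(u^{r+1}-u^{-(r+1)})}&\text{if } n-1\le s<n+r,\\[2pt] 0&\text{otherwise.}\end{cases} \]
   Context: For a polynomial $f(z)=\sum_{k=0}^n a_kz^k$ of degree $n$, write $\overline{f}(z)=\sum_k\overline{a_k}z^k$ and $f^*(z)=z^n\overline{f}(1/z)$. Given $(\alpha_n)$ with $|\alpha_n|<1$, define monic $\Phi_n$ by $\Phi_0=1$, $\Phi_{n+1}(z)=z\Phi_n(z)-\overline{\alpha_n}\Phi_n^*(z)$. Let $\mathcal{L}$ be the unique linear functional on Laurent polynomials with $\mathcal{L}(1)=1$ and $\mathcal{L}(\Phi_m(z)\overline{\Phi_n}(1/z))=0$ for $m\neq n$; set $\langle f,g\rangle=\mathcal{L}(f(z)\overline{g}(1/z))$ and $\mu_{n,r,s}=\langle\Phi_s(z),z^n\Phi_r(z)\rangle/\langle\Phi_s,\Phi_s\rangle$. *)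

theory Defs
  imports Complex_Main "HOL-Computational_Algebra.Polynomial"
begin

text \<open>f^*(z) = z^(deg f) * conj-coefficients f (1/z)\<close>
definition pstar :: "complex poly \<Rightarrow> complex poly" where
  "pstar p = reflect_poly (map_poly cnj p)"

text \<open>Monic orthogonal polynomials via the Szego recursion
  Phi_{n+1}(z) = z Phi_n(z) - conj(alpha_n) Phi_n^*(z).\<close>
fun Phi :: "(nat \<Rightarrow> complex) \<Rightarrow> nat \<Rightarrow> complex poly" where
  "Phi al 0 = 1"
| "Phi al (Suc n) = pCons 0 (Phi al n) - smult (cnj (al n)) (pstar (Phi al n))"

text \<open>A linear functional L on Laurent polynomials is given by its moments
  c k = L(z^k), k integer. Then <f,g> = L(f(z) conj-g(1/z))
  = sum_i sum_j f_i conj(g_j) c(i-j).\<close>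
definition ip :: "(int \<Rightarrow> complex) \<Rightarrow> complex poly \<Rightarrow> complex poly \<Rightarrow> complex" where
  "ip c f g = (\<Sum>i\<le>degree f. \<Sum>j\<le>degree g.
      coeff f i * cnj (coeff g j) * c (int i - int j))"

definition mu :: "(int \<Rightarrow> complex) \<Rightarrow> (nat \<Rightarrow> complex) \<Rightarrow> nat \<Rightarrow> nat \<Rightarrow> nat \<Rightarrow> complex" where
  "mu c al n r s = ip c (Phi al s) (monom 1 n * Phi al r) / ip c (Phi al s) (Phi al s)"

end

theory Submission
  imports Defs
begin

(* Write S k = u^k - u^-k. For alpha k = -S 1 / S (k+2) the Szego recursion is solved by
   Phi k = (SUM i<=k. S (i+1) / S (k+1) * z^i), thanks to the three-term identity
   S a S (a+d+1) - S (a+1) S (a+d) = - S 1 S d; equivalently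
   z^(k+1) = Phi (k+1) - S (k+1) / S (k+2) * Phi k.  Orthogonality then gives
   <Phi s, z^m> = h s, - S (s+1) / S (s+2) * h s or 0 according as m = s, m = s+1 or otherwise,
   where h s = <Phi s, Phi s> = (PROD j<s. 1 - |alpha j|^2) is nonzero by Szego's norm
   recursion, itself a consequence of the reflection symmetry of the form.  Expanding z^n Phi r
   into monomials, at most two terms survive, and the three-term identity combines them into
   the stated value of mu. *)

lemma ip_eq_sum_atMost:
  assumes "degree f \<le> N" "degree g \<le> M"
  shows "ip c f g = (\<Sum>i\<le>N. \<Sum>j\<le>M. coeff f i * cnj (coeff g j) * c (int i - int j))"
proof -
  have "ip c f g = (\<Sum>i\<le>degree f. \<Sum>j\<le>M. coeff f i * cnj (coeff g j) * c (int i - int j))"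
    unfolding ip_def
    by (intro sum.cong refl sum.mono_neutral_left) (use assms in \<open>auto simp: coeff_eq_0\<close>)
  also have "\<dots> = (\<Sum>i\<le>N. \<Sum>j\<le>M. coeff f i * cnj (coeff g j) * c (int i - int j))"
    by (rule sum.mono_neutral_left) (use assms in \<open>auto simp: coeff_eq_0\<close>)
  finally show ?thesis .
qed

lemma ip_diff_left: "ip c (f - g) h = ip c f h - ip c g h"
proof -
  let ?N = "max (degree f) (degree g)"
  have "degree (f - g) \<le> ?N"
    by (rule degree_diff_le_max)
  then show ?thesis
    by (simp add: ip_eq_sum_atMost[of "f - g" ?N h "degree h"] ip_eq_sum_atMost[of f ?N h "degree h"]
        ip_eq_sum_atMost[of g ?N h "degree h"] left_diff_distrib sum_subtractf)
qed

lemma ip_smult_left: "ip c (smult a f) h = a * ip c f h"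
  by (simp add: ip_eq_sum_atMost[of "smult a f" "degree f" h "degree h"]
      ip_eq_sum_atMost[of f "degree f" h "degree h"] sum_distrib_left mult.assoc degree_smult_le)

lemma ip_add_right: "ip c h (f + g) = ip c h f + ip c h g"
proof -
  let ?N = "max (degree f) (degree g)"
  have "degree (f + g) \<le> ?N"
    by (rule degree_add_le_max)
  then show ?thesis
    by (simp add: ip_eq_sum_atMost[of h "degree h" "f + g" ?N] ip_eq_sum_atMost[of h "degree h" f ?N]
        ip_eq_sum_atMost[of h "degree h" g ?N] distrib_left distrib_right sum.distrib)
qed

lemma ip_diff_right: "ip c h (f - g) = ip c h f - ip c h g"
proof -
  let ?N = "max (degree f) (degree g)"
  have "degree (f - g) \<le> ?N"
    by (rule degree_diff_le_max)
  then show ?thesis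
    by (simp add: ip_eq_sum_atMost[of h "degree h" "f - g" ?N] ip_eq_sum_atMost[of h "degree h" f ?N]
        ip_eq_sum_atMost[of h "degree h" g ?N] right_diff_distrib left_diff_distrib sum_subtractf)
qed

lemma ip_smult_right: "ip c h (smult a f) = cnj a * ip c h f"
  by (simp add: ip_eq_sum_atMost[of h "degree h" "smult a f" "degree f"]
      ip_eq_sum_atMost[of h "degree h" f "degree f"] sum_distrib_left degree_smult_le algebra_simps)

lemma ip_sum_right: "ip c h (\<Sum>t\<in>A. g t) = (\<Sum>t\<in>A. ip c h (g t))"
proof (induction A rule: infinite_finite_induct)
  case (insert t A)
  then show ?case
    by (simp add: ip_add_right)
qed (simp_all add: ip_def)

lemma ip_pCons_0: "ip c (pCons 0 f) (pCons 0 g) = ip c f g"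
proof -
  let ?N = "max (degree f) (degree g)"
  have "degree (pCons 0 f) \<le> Suc ?N" "degree (pCons 0 g) \<le> Suc ?N"
    using degree_pCons_le[of 0 f] degree_pCons_le[of 0 g] by auto
  then show ?thesis
    by (simp add: ip_eq_sum_atMost ip_eq_sum_atMost[of f ?N g ?N] sum.atMost_Suc_shift
        del: sum.atMost_Suc)
qed

lemma ip_monom_mult_right:
  "ip c f (monom 1 n * g) = (\<Sum>j\<le>degree g. cnj (coeff g j) * ip c f (monom 1 (n + j)))"
proof -
  have "monom 1 n * g = (\<Sum>j\<le>degree g. smult (coeff g j) (monom 1 (n + j)))"
    by (subst (1) poly_as_sum_of_monoms[symmetric])
      (simp add: sum_distrib_left mult_monom smult_monom)
  then show ?thesis
    by (simp add: ip_sum_right ip_smult_right)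
qed

(* The reflection z^N fbar(1/z), i.e. f^* taken as if f had degree N; pstar is the case
   N = degree f. *)
definition pstar_at :: "nat \<Rightarrow> complex poly \<Rightarrow> complex poly" where
  "pstar_at N f = (\<Sum>i\<le>N. monom (cnj (coeff f (N - i))) i)"

lemma coeff_pstar_at: "coeff (pstar_at N f) i = (if i \<le> N then cnj (coeff f (N - i)) else 0)"
  by (auto simp: pstar_at_def coeff_sum coeff_monom)

lemma degree_pstar_at_le: "degree (pstar_at N f) \<le> N"
  by (rule degree_le) (simp add: coeff_pstar_at)

lemma coeff_pstar: "coeff (pstar p) i = (if i \<le> degree p then cnj (coeff p (degree p - i)) else 0)"
  by (auto simp: pstar_def coeff_reflect_poly coeff_map_poly degree_map_poly)

lemma degree_pstar_le: "degree (pstar p) \<le> degree p"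
  by (rule degree_le) (simp add: coeff_pstar)

lemma pstar_at_degree: "pstar_at (degree p) p = pstar p"
  by (rule poly_eqI) (simp add: coeff_pstar_at coeff_pstar)

lemma pstar_at_pCons_0: "pstar_at (Suc (degree p)) (pCons 0 p) = pstar p"
  by (rule poly_eqI) (auto simp: coeff_pstar_at coeff_pstar coeff_pCons Suc_diff_le split: nat.split)

lemma pstar_at_1: "pstar_at N 1 = monom 1 N"
  by (rule poly_eqI) (auto simp: coeff_pstar_at coeff_monom coeff_1)

lemma pstar_at_monom: "pstar_at N (monom 1 N) = 1"
  by (rule poly_eqI) (auto simp: coeff_pstar_at coeff_monom coeff_1)

lemma ip_pstar_at:
  assumes "degree f \<le> N" "degree g \<le> N"
  shows "ip c (pstar_at N f) (pstar_at N g) = ip c g f"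
proof -
  have flip: "(\<Sum>i\<le>N. F i) = (\<Sum>i\<le>N. F (N - i))" for F :: "nat \<Rightarrow> complex"
    using sum.atLeastAtMost_rev[of F 0 N] by (simp add: atLeast0AtMost)
  have "ip c (pstar_at N f) (pstar_at N g)
      = (\<Sum>i\<le>N. \<Sum>j\<le>N. cnj (coeff f (N - i)) * coeff g (N - j) * c (int i - int j))"
    by (simp add: ip_eq_sum_atMost[OF degree_pstar_at_le degree_pstar_at_le] coeff_pstar_at)
  also have "\<dots> = (\<Sum>i\<le>N. \<Sum>j\<le>N. cnj (coeff f i) * coeff g j * c (int j - int i))"
    by (subst flip, subst (2) flip) (intro sum.cong refl, auto simp: of_nat_diff)
  also have "\<dots> = ip c g f"
    by (subst sum.swap) (simp add: ip_eq_sum_atMost[OF assms(2,1)] mult.commute)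
  finally show ?thesis .
qed

lemma degree_le_if_coeff_Suc_eq_0:
  assumes "degree p \<le> Suc n" "coeff p (Suc n) = 0"
  shows "degree p \<le> n"
  using assms by (metis Suc_leI antisym_conv1 degree_le le_degree linorder_not_le)

lemma degree_Phi_le: "degree (Phi al n) \<le> n"
proof (induction n)
  case (Suc n)
  have "degree (smult (cnj (al n)) (pstar (Phi al n))) \<le> Suc n"
    using degree_smult_le degree_pstar_le Suc.IH le_SucI order.trans by metis
  moreover have "degree (pCons 0 (Phi al n)) \<le> Suc n"
    using degree_pCons_le Suc.IH Suc_le_mono order.trans by metis
  ultimately show ?case
    by (simp add: degree_diff_le)
qed simp

lemma coeff_Phi_self: "coeff (Phi al n) n = 1"
proof (induction n)
  case (Suc n)
  have "coeff (pstar (Phi al n)) (Suc n) = 0"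
    using degree_pstar_le[of "Phi al n"] degree_Phi_le[of al n] by (intro coeff_eq_0) simp
  then show ?case
    using Suc by simp
qed simp

lemma degree_Phi: "degree (Phi al n) = n"
  by (rule antisym[OF degree_Phi_le le_degree]) (simp add: coeff_Phi_self)

(* The recursion is unfolded explicitly where needed; as a simp rule it makes goals blow up. *)
declare Phi.simps(2) [simp del]

context
  fixes c :: "int \<Rightarrow> complex" and al :: "nat \<Rightarrow> complex"
  assumes orth: "\<And>m k. m \<noteq> k \<Longrightarrow> ip c (Phi al m) (Phi al k) = 0"
begin

lemma ip_Phi_degree_less:
  assumes "degree p < k"
  shows "ip c (Phi al k) p = 0"
proof -
  have "ip c (Phi al k) p = 0" if "degree p \<le> d" "d < k" for d p
    using that
  proof (induction d arbitrary: p)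
    case 0
    then have "p = smult (coeff p 0) (Phi al 0)"
      using degree_0_id[of p] by simp
    then show ?case
      using "0.prems" orth[of k 0] by (metis ip_smult_right mult_zero_right neq0_conv)
  next
    case (Suc d)
    define q where "q = p - smult (coeff p (Suc d)) (Phi al (Suc d))"
    have "degree (smult (coeff p (Suc d)) (Phi al (Suc d))) \<le> Suc d"
      using degree_smult_le degree_Phi_le order.trans by metis
    then have "degree q \<le> Suc d"
      unfolding q_def using Suc.prems(1) by (rule degree_diff_le[rotated])
    moreover have "coeff q (Suc d) = 0"
      by (simp add: q_def coeff_Phi_self)
    ultimately have "degree q \<le> d"
      by (rule degree_le_if_coeff_Suc_eq_0)
    then have "ip c (Phi al k) q = 0"
      using Suc.IH Suc.prems(2) by simp
    moreover have "ip c (Phi al k) q = ip c (Phi al k) p"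
      using Suc.prems by (simp add: q_def ip_diff_right ip_smult_right orth)
    ultimately show ?case
      by simp
  qed
  with assms show ?thesis
    by blast
qed

lemma ip_Phi_monom_self: "ip c (Phi al k) (monom 1 k) = ip c (Phi al k) (Phi al k)"
proof (cases k)
  case (Suc n)
  have "degree (Phi al k - monom 1 k) \<le> Suc n"
    using degree_Phi_le[of al k] degree_monom_le[of 1 k] Suc by (metis degree_diff_le)
  moreover have "coeff (Phi al k - monom 1 k) (Suc n) = 0"
    using Suc by (simp add: coeff_Phi_self)
  ultimately have "degree (Phi al k - monom 1 k) \<le> n"
    by (rule degree_le_if_coeff_Suc_eq_0)
  then have "ip c (Phi al k) (Phi al k - monom 1 k) = 0"
    using Suc by (intro ip_Phi_degree_less) auto
  then show ?thesis
    by (simp add: ip_diff_right)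
qed simp

lemma ip_Phi_Suc_self:
  "ip c (Phi al (Suc k)) (Phi al (Suc k)) =
     complex_of_real (1 - (cmod (al k))\<^sup>2) * ip c (Phi al k) (Phi al k)"
proof -
  define P where "P = Phi al k"
  define h where "h = ip c P P"
  have dP: "degree P = k"
    unfolding P_def by (rule degree_Phi)
  have rec: "Phi al (Suc k) = pCons 0 P - smult (cnj (al k)) (pstar P)"
    by (simp add: P_def Phi.simps)
  have hP: "ip c P (monom 1 k) = h"
    unfolding P_def h_def by (rule ip_Phi_monom_self)
  (* Reflection turns the pairing of P^* with z^(k+1) into that of 1 with z P, which the
     orthogonality of Phi (Suc k) to Phi 0 = 1 evaluates. *)
  have "degree (pCons 0 P) \<le> Suc k"
    using degree_pCons_le dP by metis
  from ip_pstar_at[OF this, of 1 c]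
  have "ip c (pstar P) (monom 1 (Suc k)) = ip c 1 (pCons 0 P)"
    by (simp add: pstar_at_pCons_0[of P, unfolded dP] pstar_at_1)
  moreover have "ip c 1 (pstar P) = h"
    using ip_pstar_at[of "monom 1 k" k P c] dP
    by (simp add: pstar_at_monom pstar_at_degree[of P, unfolded dP] degree_monom_le hP)
  moreover have "ip c (Phi al 0) (Phi al (Suc k)) = 0"
    by (rule orth) simp
  ultimately have "ip c (pstar P) (monom 1 (Suc k)) = al k * h"
    unfolding rec by (simp add: ip_diff_right ip_smult_right)
  moreover have "ip c (pCons 0 P) (monom 1 (Suc k)) = h"
    by (simp add: monom_Suc ip_pCons_0 hP)
  moreover have "ip c (Phi al (Suc k)) (Phi al (Suc k)) = ip c (Phi al (Suc k)) (monom 1 (Suc k))"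
    by (rule ip_Phi_monom_self[symmetric])
  ultimately have "ip c (Phi al (Suc k)) (Phi al (Suc k)) = h - cnj (al k) * al k * h"
    unfolding rec by (simp add: ip_diff_left ip_smult_left)
  then show ?thesis
    by (simp add: h_def P_def complex_norm_square[unfolded of_real_power] algebra_simps)
qed

lemma ip_Phi_self:
  assumes "c 0 = 1"
  shows "ip c (Phi al k) (Phi al k) = (\<Prod>j<k. complex_of_real (1 - (cmod (al j))\<^sup>2))"
proof (induction k)
  case 0
  then show ?case
    by (simp add: ip_def assms)
qed (simp add: ip_Phi_Suc_self)

lemma ip_Phi_self_neq_0:
  assumes "c 0 = 1" "\<And>j. cmod (al j) < 1"
  shows "ip c (Phi al k) (Phi al k) \<noteq> 0"
proof -
  have "complex_of_real (1 - (cmod (al j))\<^sup>2) \<noteq> 0" for j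
    using assms(2)[of j] abs_square_less_1[of "cmod (al j)"] by (simp only: of_real_eq_0_iff) simp
  then show ?thesis
    unfolding ip_Phi_self[OF assms(1)] prod_zero_iff[OF finite_lessThan] by blast
qed

end

definition sinh_pow :: "real \<Rightarrow> nat \<Rightarrow> real" where
  "sinh_pow u k = u ^ k - 1 / u ^ k"

lemma sinh_pow_0 [simp]: "sinh_pow u 0 = 0"
  by (simp add: sinh_pow_def)

lemma sinh_pow_strict_mono:
  assumes "1 < u" "k < m"
  shows "sinh_pow u k < sinh_pow u m"
proof -
  have "u ^ k < u ^ m"
    using assms by (simp add: power_strict_increasing)
  moreover have "1 / u ^ m < 1 / u ^ k"
    using assms calculation by (simp add: frac_less2)
  ultimately show ?thesis
    by (simp add: sinh_pow_def)
qed

lemma sinh_pow_pos: "1 < u \<Longrightarrow> 0 < k \<Longrightarrow> 0 < sinh_pow u k"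
  using sinh_pow_strict_mono[of u 0 k] by simp

lemma sinh_pow_three_term:
  assumes "u \<noteq> 0"
  shows "sinh_pow u a * sinh_pow u (a + d + 1) - sinh_pow u (a + 1) * sinh_pow u (a + d)
    = - sinh_pow u 1 * sinh_pow u d"
  using assms by (simp add: sinh_pow_def power_add field_simps)

lemma sum_atMost_if_add_eq:
  fixes n m r :: nat and f :: "nat \<Rightarrow> 'a::comm_monoid_add"
  shows "(\<Sum>j\<le>r. if n + j = m then f j else 0) = (if n \<le> m \<and> m \<le> n + r then f (m - n) else 0)"
proof (cases "n \<le> m")
  case True
  then have "(\<Sum>j\<le>r. if n + j = m then f j else 0) = (\<Sum>j\<le>r. if j = m - n then f j else 0)"
    by (intro sum.cong refl) auto
  also have "\<dots> = (if m - n \<le> r then f (m - n) else 0)"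
    by (simp add: sum.delta')
  finally show ?thesis
    using True by auto
qed simp

context
  fixes u :: real and al :: "nat \<Rightarrow> complex"
  assumes u: "1 < u"
    and al: "\<And>k. al k = complex_of_real (- sinh_pow u 1 / sinh_pow u (k + 2))"
begin

lemma coeff_Phi_sinh_pow:
  "coeff (Phi al k) i = (if i \<le> k then complex_of_real (sinh_pow u (i + 1) / sinh_pow u (k + 1)) else 0)"
proof (induction k arbitrary: i)
  case 0
  then show ?case
    using sinh_pow_pos[OF u, of 1] by (auto simp: coeff_1)
next
  case (Suc k)
  have pos: "0 < sinh_pow u (k + 1)" "0 < sinh_pow u (k + 2)"
    using sinh_pow_pos[OF u] by auto
  have pstar_k: "coeff (pstar (Phi al k)) (Suc j) = complex_of_real (sinh_pow u (k - j) / sinh_pow u (k + 1))"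
    if "j \<le> k" for j
    using that by (auto simp: coeff_pstar degree_Phi Suc.IH Suc_diff_Suc)
  have "coeff (Phi al (Suc k)) i = coeff (pCons 0 (Phi al k)) i
      + complex_of_real (sinh_pow u 1 / sinh_pow u (k + 2)) * coeff (pstar (Phi al k)) i"
    by (simp add: Phi.simps al)
  also have "\<dots> = (if i \<le> Suc k then complex_of_real (sinh_pow u (i + 1) / sinh_pow u (Suc k + 1)) else 0)"
  proof (cases i)
    case 0
    then show ?thesis
      using pos by (simp add: coeff_pstar degree_Phi Suc.IH)
  next
    case (Suc j)
    show ?thesis
    proof (cases "j \<le> k")
      case True
      then obtain d where "k = j + d"
        using le_Suc_ex by blast
      then have "sinh_pow u (j + 1) / sinh_pow u (k + 1) + sinh_pow u 1 / sinh_pow u (k + 2) * (sinh_pow u (k - j) / sinh_pow u (k + 1))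
          = sinh_pow u (j + 2) / sinh_pow u (k + 2)"
        using pos sinh_pow_three_term[of u "j + 1" d] u by (simp add: field_simps)
      then show ?thesis
        using True Suc by (simp add: pstar_k Suc.IH flip: of_real_mult of_real_divide of_real_add)
    next
      case False
      then show ?thesis
        using Suc by (simp add: coeff_pstar degree_Phi Suc.IH)
    qed
  qed
  finally show ?case
    by simp
qed

lemma cmod_al_less_1: "cmod (al k) < 1"
proof -
  have "0 < sinh_pow u 1" "sinh_pow u 1 < sinh_pow u (k + 2)"
    using sinh_pow_pos[OF u] sinh_pow_strict_mono[OF u] by auto
  then show ?thesis
    unfolding al norm_of_real by simp
qed

lemma monom_Suc_eq_Phi:
  "monom 1 (Suc k) =
     Phi al (Suc k) - smult (complex_of_real (sinh_pow u (k + 1) / sinh_pow u (k + 2))) (Phi al k)"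
proof (rule poly_eqI)
  fix i
  have pos: "0 < sinh_pow u (k + 1)" "0 < sinh_pow u (k + 2)"
    using sinh_pow_pos[OF u] by auto
  have "(if i = Suc k then 1 else 0) = (if i \<le> Suc k then sinh_pow u (i + 1) / sinh_pow u (k + 2) else 0)
      - sinh_pow u (k + 1) / sinh_pow u (k + 2) * (if i \<le> k then sinh_pow u (i + 1) / sinh_pow u (k + 1) else 0)"
    using pos by (cases "i = Suc k") (auto simp: field_simps)
  then show "coeff (monom 1 (Suc k)) i = coeff (Phi al (Suc k) - smult (complex_of_real (sinh_pow u (k + 1) / sinh_pow u (k + 2))) (Phi al k)) i"
    by (auto simp: coeff_monom coeff_Phi_sinh_pow simp flip: of_real_mult of_real_divide of_real_diff)
qed

context
  fixes c :: "int \<Rightarrow> complex"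
  assumes orth: "\<And>m k. m \<noteq> k \<Longrightarrow> ip c (Phi al m) (Phi al k) = 0"
begin

lemma ip_Phi_monom:
  "ip c (Phi al s) (monom 1 m) = complex_of_real
     (if m = s then 1 else if m = Suc s then - sinh_pow u (s + 1) / sinh_pow u (s + 2) else 0)
     * ip c (Phi al s) (Phi al s)"
proof (cases "m \<le> s")
  case True
  show ?thesis
  proof (cases "m = s")
    case False
    with True have "degree (monom 1 m :: complex poly) < s"
      using degree_monom_le[of "1::complex" m] by linarith
    with False \<open>m \<le> s\<close> show ?thesis
      by (simp add: ip_Phi_degree_less[OF orth])
  qed (simp add: ip_Phi_monom_self[OF orth])
next
  case False
  then obtain k where "m = Suc k" "s \<le> k"
    using Suc_le_D by (metis not_less_eq_eq)
  then show ?thesis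
    by (auto simp: monom_Suc_eq_Phi ip_diff_right ip_smult_right orth)
qed

lemma ip_Phi_monom_mult:
  "ip c (Phi al s) (monom 1 n * Phi al r) = complex_of_real
     (\<Sum>j\<le>r. sinh_pow u (j + 1) / sinh_pow u (r + 1) * (if n + j = s then 1
        else if n + j = Suc s then - sinh_pow u (s + 1) / sinh_pow u (s + 2) else 0))
     * ip c (Phi al s) (Phi al s)"
  by (simp add: ip_monom_mult_right degree_Phi coeff_Phi_sinh_pow ip_Phi_monom sum_distrib_right
      mult.assoc)

end

end

lemma sum_sinh_pow_eq:
  fixes u :: real and n r s :: nat
  assumes u: "1 < u"
  shows "(\<Sum>j\<le>r. sinh_pow u (j + 1) / sinh_pow u (r + 1) * (if n + j = s then 1
        else if n + j = Suc s then - sinh_pow u (s + 1) / sinh_pow u (s + 2) else 0))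
    = (if s = n + r then 1
       else if int n - 1 \<le> int s \<and> s < n + r then
         - (sinh_pow u n * sinh_pow u 1) / (sinh_pow u (s + 2) * sinh_pow u (r + 1))
       else 0)"
proof -
  define A where "A j = sinh_pow u (j + 1) / sinh_pow u (r + 1)" for j
  define B where "B = - sinh_pow u (s + 1) / sinh_pow u (s + 2)"
  have pos: "0 < k \<Longrightarrow> 0 < sinh_pow u k" for k
    using sinh_pow_pos[OF u] by blast
  have "(\<Sum>j\<le>r. sinh_pow u (j + 1) / sinh_pow u (r + 1) * (if n + j = s then 1
        else if n + j = Suc s then - sinh_pow u (s + 1) / sinh_pow u (s + 2) else 0))
      = (\<Sum>j\<le>r. if n + j = s then A j else 0) + (\<Sum>j\<le>r. if n + j = Suc s then A j * B else 0)"
    unfolding sum.distrib[symmetric] by (intro sum.cong refl) (auto simp: A_def B_def)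
  also have "\<dots> = (if n \<le> s \<and> s \<le> n + r then A (s - n) else 0)
      + (if n \<le> Suc s \<and> Suc s \<le> n + r then A (Suc s - n) * B else 0)"
    by (simp only: sum_atMost_if_add_eq)
  also have "\<dots> = (if s = n + r then 1
       else if int n - 1 \<le> int s \<and> s < n + r then
         - (sinh_pow u n * sinh_pow u 1) / (sinh_pow u (s + 2) * sinh_pow u (r + 1))
       else 0)"
  proof -
    consider "s = n + r" | "n \<le> s" "s < n + r" | "Suc s = n" | "Suc s < n \<or> n + r < s"
      by linarith
    then show ?thesis
    proof cases
      case 1
      then show ?thesis
        using pos[of "r + 1"] by (simp add: A_def)
    next
      case 2
      then obtain d where s: "s = n + d"
        using le_Suc_ex by blast
      have "A d + A (d + 1) * B = (sinh_pow u (d + 1) * sinh_pow u (d + 1 + n + 1)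
          - sinh_pow u (d + 1 + 1) * sinh_pow u (d + 1 + n)) / (sinh_pow u (s + 2) * sinh_pow u (r + 1))"
        using pos[of "r + 1"] pos[of "s + 2"] s by (simp add: A_def B_def field_simps)
      also have "\<dots> = - (sinh_pow u n * sinh_pow u 1) / (sinh_pow u (s + 2) * sinh_pow u (r + 1))"
        using u by (subst sinh_pow_three_term) (simp_all add: mult.commute)
      finally show ?thesis
        using 2 s by (simp add: Suc_diff_le)
    next
      case 3
      then show ?thesis
        using pos[of "r + 1"] pos[of n] pos[of "n + 1"] by (auto simp: A_def B_def field_simps)
    next
      case 4
      then show ?thesis
        by auto
    qed
  qed
  finally show ?thesis .
qed

theorem proposition4p11:
  fixes a u :: real and al :: "nat \<Rightarrow> complex" and c :: "int \<Rightarrow> complex"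
    and n r s :: nat
  assumes "0 < a" and "a < 1"
    and "u = 1 / a + sqrt (1 / a ^ 2 - 1)"
    and "\<forall>k. al k = complex_of_real (- (u - 1 / u) / (u ^ (k + 2) - 1 / u ^ (k + 2)))"
    and "c 0 = 1"
    and "\<forall>m k. m \<noteq> k \<longrightarrow> ip c (Phi al m) (Phi al k) = 0"
  shows "mu c al n r s =
    (if s = n + r then 1
     else if int n - 1 \<le> int s \<and> s < n + r then
       complex_of_real (- ((u ^ n - 1 / u ^ n) * (u - 1 / u)) /
         ((u ^ (s + 2) - 1 / u ^ (s + 2)) * (u ^ (r + 1) - 1 / u ^ (r + 1))))
     else 0)"
proof -
  have "1 < 1 / a"
    using assms(1,2) by simp
  moreover have "0 \<le> sqrt (1 / a ^ 2 - 1)"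
    using assms(1,2) by (simp add: power_le_one)
  ultimately have u: "1 < u"
    using assms(3) by linarith
  have al: "al k = complex_of_real (- sinh_pow u 1 / sinh_pow u (k + 2))" for k
    using assms(4) by (simp add: sinh_pow_def)
  have orth: "ip c (Phi al m) (Phi al k) = 0" if "m \<noteq> k" for m k
    using assms(6) that by blast
  have "ip c (Phi al s) (Phi al s) \<noteq> 0"
    using ip_Phi_self_neq_0[OF orth assms(5) cmod_al_less_1[OF u al]] .
  moreover have "ip c (Phi al s) (monom 1 n * Phi al r) = complex_of_real (if s = n + r then 1
       else if int n - 1 \<le> int s \<and> s < n + r then
         - (sinh_pow u n * sinh_pow u 1) / (sinh_pow u (s + 2) * sinh_pow u (r + 1))
       else 0) * ip c (Phi al s) (Phi al s)"
    unfolding sum_sinh_pow_eq[OF u, symmetric] by (rule ip_Phi_monom_mult[OF u al orth])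
  ultimately show ?thesis
    by (simp add: mu_def sinh_pow_def)
qed

end
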